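(* Let $M_1,\dots,M_n$ be real skew-symmetric $m\times m$ matrices with $2\leq n\leq m$, and let $v_1,\dots,v_{m-n}$ be nonpositive real numbers such that $M_1^2-\sum_{l=2}^n M_l^2=\mathrm{Diag}\left(-\tfrac12\mathrm{tr}(M_1^2),\tfrac12\mathrm{tr}(M_2^2),\dots,\tfrac12\mathrm{tr}(M_n^2),v_1,\dots,v_{m-n}\right).$ Then $(v_1,\dots,v_{m-n})=(0,\dots,0)$, $\lambda_1\left(\sum_{l=2}^n M_l^2\right)=\sum_{l=2}^n\lambda_1(M_l^2)$, and $\mathrm{rank}(M_i)\leq2$ for every $i\in\{2,\dots,n\}$.
   Context: For a real symmetric (or complex Hermitian) $m\times m$ matrix $A$, its real eigenvalues counted with multiplicity are ordered $\lambda_1(A)\leq\lambda_2(A)\leq\dots\leq\lambda_m(A)$. *)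

theory Defs
  imports "Jordan_Normal_Form.Char_Poly" "Jordan_Normal_Form.DL_Rank"
begin

definition mtrace :: "real mat \<Rightarrow> real" where
  "mtrace A = (\<Sum>i<dim_row A. A $$ (i, i))"

definition diag_of :: "nat \<Rightarrow> (nat \<Rightarrow> real) \<Rightarrow> real mat" where
  "diag_of m d = mat m m (\<lambda>(i, j). if i = j then d i else 0)"

definition msum :: "nat \<Rightarrow> nat set \<Rightarrow> (nat \<Rightarrow> real mat) \<Rightarrow> real mat" where
  "msum m I f = mat m m (\<lambda>ij. \<Sum>l\<in>I. f l $$ ij)"

definition lambda1 :: "real mat \<Rightarrow> real" where
  "lambda1 A = Min {x. eigenvalue A x}"

end

theory Submission
  imports Defs
begin

text \<open>
Indices start at 0, so M 0 is the paper's M_1. Write c_l for the (0,0) entry of M_l^2 and R_l for the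
squared Frobenius norm of M_l with row and column 0 deleted; for skew-symmetric M_l,
tr(M_l^2) = 2 c_l - R_l. Comparing the (0,0) entries and the traces of the two sides of the identity
gives 3/2 (R_1 + ... + R_{n-1} - 2 c_0) = v_0 + ... + v_{m-n-1}. The left side is nonnegative, as
c_0 = -|row 0 of M_0|^2, and the right side is nonpositive, so all v_j vanish and every M_l with
l \<ge> 1 is supported on row and column 0: M_l = u_l e_0^T - e_0 u_l^T with u_l orthogonal to e_0.
Such a matrix has rank at most 2, and the sum of the M_l^2 is
-\<Sum> u_l u_l^T - (\<Sum> |u_l|^2) e_0 e_0^T, whose smallest eigenvalue -\<Sum> |u_l|^2 is additive in l.
\<close>

lemma Cauchy_Schwarz_sum:
  fixes a b :: "'i \<Rightarrow> real"
  shows "(\<Sum>i\<in>S. a i * b i)\<^sup>2 \<le> (\<Sum>i\<in>S. (a i)\<^sup>2) * (\<Sum>i\<in>S. (b i)\<^sup>2)"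
proof -
  let ?A = "\<Sum>i\<in>S. (a i)\<^sup>2" and ?B = "\<Sum>i\<in>S. (b i)\<^sup>2" and ?C = "\<Sum>i\<in>S. a i * b i"
  have expand: "(a i * b j - a j * b i)\<^sup>2
      = (a i)\<^sup>2 * (b j)\<^sup>2 + (b i)\<^sup>2 * (a j)\<^sup>2 - 2 * ((a i * b i) * (a j * b j))" for i j
    by (simp add: power2_eq_square algebra_simps)
  have "0 \<le> (\<Sum>i\<in>S. \<Sum>j\<in>S. (a i * b j - a j * b i)\<^sup>2)"
    by (intro sum_nonneg) auto
  also have "\<dots> = (\<Sum>i\<in>S. \<Sum>j\<in>S. (a i)\<^sup>2 * (b j)\<^sup>2) + (\<Sum>i\<in>S. \<Sum>j\<in>S. (b i)\<^sup>2 * (a j)\<^sup>2)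
      - 2 * (\<Sum>i\<in>S. \<Sum>j\<in>S. (a i * b i) * (a j * b j))"
    unfolding expand by (simp only: sum.distrib sum_subtractf sum_distrib_left)
  also have "\<dots> = ?A * ?B + ?B * ?A - 2 * (?C * ?C)"
    by (simp only: sum_product)
  finally show ?thesis by (simp add: power2_eq_square)
qed

lemma sum_lessThan_first:
  fixes f :: "nat \<Rightarrow> 'a::comm_monoid_add"
  assumes "0 < m"
  shows "(\<Sum>k<m. f k) = f 0 + (\<Sum>k\<in>{1..<m}. f k)"
  using assms by (simp add: lessThan_atLeast0 sum.atLeast_Suc_lessThan)

lemma index_msum: "i < m \<Longrightarrow> j < m \<Longrightarrow> msum m I f $$ (i, j) = (\<Sum>l\<in>I. f l $$ (i, j))"
  by (simp add: msum_def)

lemma msum_carrier: "msum m I f \<in> carrier_mat m m"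
  by (simp add: msum_def)

lemma msum_singleton: "f l \<in> carrier_mat m m \<Longrightarrow> msum m {l} f = f l"
  by (intro eq_matI) (auto simp: msum_def)

lemma mtrace_minus: "A \<in> carrier_mat m m \<Longrightarrow> B \<in> carrier_mat m m \<Longrightarrow> mtrace (A - B) = mtrace A - mtrace B"
  by (simp add: mtrace_def sum_subtractf)

lemma mtrace_msum:
  assumes "\<And>l. l \<in> I \<Longrightarrow> f l \<in> carrier_mat m m"
  shows "mtrace (msum m I f) = (\<Sum>l\<in>I. mtrace (f l))"
  using assms by (auto simp: mtrace_def msum_def sum.swap[of _ I] intro!: sum.cong)

lemma mtrace_diag_of: "mtrace (diag_of m d) = (\<Sum>i<m. d i)"
  by (simp add: mtrace_def diag_of_def)

lemma quadratic_form_sum: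
  fixes A :: "real mat"
  assumes "A \<in> carrier_mat m m" "x \<in> carrier_vec m"
  shows "x \<bullet> (A *\<^sub>v x) = (\<Sum>i<m. \<Sum>j<m. x $ i * A $$ (i, j) * x $ j)"
  using assms by (simp add: scalar_prod_def lessThan_atLeast0 sum_distrib_left mult.assoc)

lemma lambda1_eqI:
  fixes P :: "real mat"
  assumes P: "P \<in> carrier_mat m m"
    and w: "w \<in> carrier_vec m" "w \<noteq> 0\<^sub>v m" "P *\<^sub>v w = c \<cdot>\<^sub>v w"
    and Rayleigh: "\<And>x. x \<in> carrier_vec m \<Longrightarrow> c * (x \<bullet> x) \<le> x \<bullet> (P *\<^sub>v x)"
  shows "lambda1 P = c"
  unfolding lambda1_def
proof (rule Min_eqI)
  have "char_poly P \<noteq> 0"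
    using degree_monic_char_poly[OF P] by auto
  then show "finite {x. eigenvalue P x}"
    using poly_roots_finite eigenvalue_root_char_poly[OF P] by simp
  show "c \<in> {x. eigenvalue P x}"
    using w P unfolding eigenvalue_def eigenvector_def by auto
  fix y assume "y \<in> {x. eigenvalue P x}"
  then obtain x where x: "x \<in> carrier_vec m" "x \<noteq> 0\<^sub>v m" "P *\<^sub>v x = y \<cdot>\<^sub>v x"
    using P unfolding eigenvalue_def eigenvector_def by auto
  have "0 < x \<bullet> x"
    using conjugate_square_greater_0_vec[OF x(1)] x(2) by simp
  moreover have "c * (x \<bullet> x) \<le> y * (x \<bullet> x)"
    using Rayleigh[OF x(1)] x by simp
  ultimately show "c \<le> y" by simp
qed

lemma quadratic_form_neg_gram_minus_corner:
  fixes u :: "'l \<Rightarrow> nat \<Rightarrow> real" and P :: "real mat"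
  assumes P: "P \<in> carrier_mat m m" and x: "x \<in> carrier_vec m" and "0 < m"
    and P_entry: "\<And>i j. i < m \<Longrightarrow> j < m \<Longrightarrow>
      P $$ (i, j) = - (\<Sum>l\<in>K. u l i * u l j) - (if i = 0 \<and> j = 0 then W else 0)"
  shows "x \<bullet> (P *\<^sub>v x) = - (\<Sum>l\<in>K. (\<Sum>i<m. u l i * x $ i)\<^sup>2) - W * (x $ 0)\<^sup>2"
proof -
  have entry: "x $ i * P $$ (i, j) * x $ j = - (\<Sum>l\<in>K. (u l i * x $ i) * (u l j * x $ j))
      - (if i = 0 \<and> j = 0 then W * (x $ 0)\<^sup>2 else 0)" if "i < m" "j < m" for i j
    using that by (simp add: P_entry sum_distrib_left sum_distrib_right algebra_simps power2_eq_square)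
  have "x \<bullet> (P *\<^sub>v x) = (\<Sum>i<m. \<Sum>j<m. x $ i * P $$ (i, j) * x $ j)"
    by (rule quadratic_form_sum[OF P x])
  also have "\<dots> = - (\<Sum>i<m. \<Sum>j<m. \<Sum>l\<in>K. (u l i * x $ i) * (u l j * x $ j))
      - (\<Sum>i<m. \<Sum>j<m. if i = 0 \<and> j = 0 then W * (x $ 0)\<^sup>2 else 0)"
    by (simp add: entry sum_subtractf sum_negf)
  also have "(\<Sum>i<m. \<Sum>j<m. if i = 0 \<and> j = 0 then W * (x $ 0)\<^sup>2 else 0) = W * (x $ 0)\<^sup>2"
    using \<open>0 < m\<close> by (simp add: sum_lessThan_first)
  also have "(\<Sum>i<m. \<Sum>j<m. \<Sum>l\<in>K. (u l i * x $ i) * (u l j * x $ j))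
      = (\<Sum>l\<in>K. (\<Sum>i<m. u l i * x $ i)\<^sup>2)"
    by (simp add: power2_eq_square sum_product sum.swap[of _ K])
  finally show ?thesis .
qed

lemma lambda1_neg_gram_minus_corner:
  fixes u :: "'l \<Rightarrow> nat \<Rightarrow> real" and P :: "real mat"
  assumes P: "P \<in> carrier_mat m m" and "0 < m"
    and u_0: "\<And>l. l \<in> K \<Longrightarrow> u l 0 = 0"
    and W: "W = (\<Sum>l\<in>K. \<Sum>k<m. (u l k)\<^sup>2)"
    and P_entry: "\<And>i j. i < m \<Longrightarrow> j < m \<Longrightarrow>
      P $$ (i, j) = - (\<Sum>l\<in>K. u l i * u l j) - (if i = 0 \<and> j = 0 then W else 0)"
  shows "lambda1 P = - W"
  \<comment> \<open>P = -\<Sum> u_l u_l^T - W e_0 e_0^T with u_l orthogonal to e_0: e_0 is an eigenvector, and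
    Cauchy-Schwarz on the coordinates 1, ..., m - 1 gives the matching Rayleigh bound.\<close>
proof (rule lambda1_eqI[OF P])
  show "unit_vec m 0 \<in> carrier_vec m" "unit_vec m 0 \<noteq> 0\<^sub>v m"
    using \<open>0 < m\<close> by (auto simp: vec_eq_iff)
  show "P *\<^sub>v unit_vec m 0 = (- W) \<cdot>\<^sub>v unit_vec m 0"
    using P \<open>0 < m\<close> by (intro eq_vecI) (auto simp: P_entry u_0 scalar_prod_right_unit)
  fix x :: "real vec" assume x: "x \<in> carrier_vec m"
  define X where "X = (\<Sum>i\<in>{1..<m}. (x $ i)\<^sup>2)"
  have "x \<bullet> x = (x $ 0)\<^sup>2 + X"
    using x \<open>0 < m\<close>
    by (simp add: scalar_prod_def lessThan_atLeast0[symmetric] sum_lessThan_first X_def power2_eq_square)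
  moreover have "(\<Sum>i<m. u l i * x $ i)\<^sup>2 \<le> (\<Sum>k<m. (u l k)\<^sup>2) * X" if "l \<in> K" for l
    using Cauchy_Schwarz_sum[of "u l" "\<lambda>i. x $ i" "{1..<m}"] \<open>0 < m\<close> u_0[OF that]
    by (simp add: sum_lessThan_first X_def)
  then have "(\<Sum>l\<in>K. (\<Sum>i<m. u l i * x $ i)\<^sup>2) \<le> W * X"
    unfolding W sum_distrib_right by (rule sum_mono)
  ultimately show "- W * (x \<bullet> x) \<le> x \<bullet> (P *\<^sub>v x)"
    using quadratic_form_neg_gram_minus_corner[OF P x \<open>0 < m\<close> P_entry]
    by (simp add: algebra_simps)
qed

definition lower_block_sqnorm :: "real mat \<Rightarrow> real" where
  "lower_block_sqnorm A = (\<Sum>i\<in>{1..<dim_row A}. \<Sum>k\<in>{1..<dim_col A}. (A $$ (i, k))\<^sup>2)"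

lemma lower_block_sqnorm_nonneg: "0 \<le> lower_block_sqnorm A"
  unfolding lower_block_sqnorm_def by (intro sum_nonneg) auto

lemma lower_block_sqnorm_eq_0_iff:
  "lower_block_sqnorm A = 0 \<longleftrightarrow>
    (\<forall>i k. 0 < i \<longrightarrow> i < dim_row A \<longrightarrow> 0 < k \<longrightarrow> k < dim_col A \<longrightarrow> A $$ (i, k) = 0)"
  unfolding lower_block_sqnorm_def
  by (auto simp: sum_nonneg_eq_0_iff sum_nonneg Suc_le_eq)

lemma rank_le_2_if_lower_block_zero:
  fixes A :: "real mat"
  assumes A: "A \<in> carrier_mat m m" and "lower_block_sqnorm A = 0"
  shows "vec_space.rank m A \<le> 2"
proof -
  define R where "R = mat m m (\<lambda>(i, k). (if i = 0 then 1 else 0) * A $$ (0, k))"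
  define C where "C = mat m m (\<lambda>(i, k). (if i = 0 then 0 else A $$ (i, 0)) * (if k = 0 then 1 else 0))"
  have R: "R \<in> carrier_mat m m" and C: "C \<in> carrier_mat m m"
    unfolding R_def C_def by auto
  have "A = R + C"
    using A assms(2) unfolding lower_block_sqnorm_eq_0_iff R_def C_def
    by (intro eq_matI) auto
  moreover have "vec_space.rank m R \<le> 1"
    by (rule vec_space.rank_le_1_product_entries[OF R]) (auto simp: R_def)
  moreover have "vec_space.rank m C \<le> 1"
    by (rule vec_space.rank_le_1_product_entries[OF C]) (auto simp: C_def)
  ultimately show ?thesis
    using vec_space.rank_subadditive[OF R C] by simp
qed

lemma skew_mat_entry:
  assumes "A \<in> carrier_mat m m" "transpose_mat A = - A" "i < m" "j < m"
  shows "A $$ (j, i) = - A $$ (i, j)"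
  using assms by (metis carrier_matD index_transpose_mat(1) index_uminus_mat(1))

lemma skew_square_diag:
  fixes A :: "real mat"
  assumes A: "A \<in> carrier_mat m m" "transpose_mat A = - A" and "i < m"
  shows "(A * A) $$ (i, i) = - (\<Sum>k<m. (A $$ (i, k))\<^sup>2)"
  using assms skew_mat_entry[OF A _ \<open>i < m\<close>]
  by (simp add: scalar_prod_def lessThan_atLeast0 power2_eq_square sum_negf[symmetric])

lemma mtrace_skew_square:
  fixes A :: "real mat"
  assumes A: "A \<in> carrier_mat m m" "transpose_mat A = - A" and "0 < m"
  shows "mtrace (A * A) = 2 * (A * A) $$ (0, 0) - lower_block_sqnorm A"
proof -
  have "(\<Sum>k<m. (A $$ (0, k))\<^sup>2) = (\<Sum>k<m. (A $$ (k, 0))\<^sup>2)"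
    using skew_mat_entry[OF A _ \<open>0 < m\<close>] by (intro sum.cong) (auto simp: power2_eq_square)
  also have "\<dots> = (\<Sum>i\<in>{1..<m}. (A $$ (i, 0))\<^sup>2)"
    using sum_lessThan_first[OF \<open>0 < m\<close>, of "\<lambda>k. (A $$ (k, 0))\<^sup>2"]
      skew_mat_entry[OF A \<open>0 < m\<close> \<open>0 < m\<close>] by simp
  finally have row_0: "(\<Sum>k<m. (A $$ (0, k))\<^sup>2) = (\<Sum>i\<in>{1..<m}. (A $$ (i, 0))\<^sup>2)" .
  have "mtrace (A * A) = (\<Sum>i<m. (A * A) $$ (i, i))"
    using A by (simp add: mtrace_def del: index_mult_mat(1))
  also have "\<dots> = - (\<Sum>i<m. \<Sum>k<m. (A $$ (i, k))\<^sup>2)"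
    using skew_square_diag[OF A] by (simp add: sum_negf del: index_mult_mat(1))
  also have "(\<Sum>i<m. \<Sum>k<m. (A $$ (i, k))\<^sup>2)
      = (\<Sum>k<m. (A $$ (0, k))\<^sup>2) + (\<Sum>i\<in>{1..<m}. (A $$ (i, 0))\<^sup>2) + lower_block_sqnorm A"
    using A \<open>0 < m\<close>
    by (simp add: sum_lessThan_first[of m] sum.distrib lower_block_sqnorm_def)
  finally show ?thesis
    using skew_square_diag[OF A \<open>0 < m\<close>] row_0 by simp
qed

lemma skew_square_arrow:
  fixes A :: "real mat"
  assumes A: "A \<in> carrier_mat m m" "transpose_mat A = - A"
    and "lower_block_sqnorm A = 0" and "i < m" "j < m"
  shows "(A * A) $$ (i, j)
    = - (A $$ (i, 0) * A $$ (j, 0)) - (if i = 0 \<and> j = 0 then \<Sum>k<m. (A $$ (k, 0))\<^sup>2 else 0)"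
proof -
  have "0 < m" using \<open>i < m\<close> by simp
  have A_00: "A $$ (0, 0) = 0"
    using skew_mat_entry[OF A \<open>0 < m\<close> \<open>0 < m\<close>] by simp
  have lower: "A $$ (i', k) = 0" if "0 < i'" "i' < m" "0 < k" "k < m" for i' k
    using that A \<open>lower_block_sqnorm A = 0\<close> unfolding lower_block_sqnorm_eq_0_iff by auto
  have off_0: "A $$ (i, k) * A $$ (k, j) = (if i = 0 \<and> j = 0 then - (A $$ (k, 0))\<^sup>2 else 0)"
    if "k \<in> {1..<m}" for k
    using that \<open>i < m\<close> \<open>j < m\<close> lower skew_mat_entry[OF A, of k 0] by (auto simp: power2_eq_square)
  have "(A * A) $$ (i, j) = (\<Sum>k<m. A $$ (i, k) * A $$ (k, j))"
    using A \<open>i < m\<close> \<open>j < m\<close> by (simp add: scalar_prod_def lessThan_atLeast0)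
  also have "\<dots> = A $$ (i, 0) * A $$ (0, j) + (\<Sum>k\<in>{1..<m}. A $$ (i, k) * A $$ (k, j))"
    by (rule sum_lessThan_first[OF \<open>0 < m\<close>])
  also have "(\<Sum>k\<in>{1..<m}. A $$ (i, k) * A $$ (k, j))
      = (if i = 0 \<and> j = 0 then - (\<Sum>k\<in>{1..<m}. (A $$ (k, 0))\<^sup>2) else 0)"
    by (simp only: sum.cong[OF refl off_0]) (simp add: sum_negf)
  also have "(\<Sum>k\<in>{1..<m}. (A $$ (k, 0))\<^sup>2) = (\<Sum>k<m. (A $$ (k, 0))\<^sup>2)"
    using sum_lessThan_first[OF \<open>0 < m\<close>, of "\<lambda>k. (A $$ (k, 0))\<^sup>2"] A_00 by simp
  finally show ?thesis
    using skew_mat_entry[OF A \<open>j < m\<close> \<open>0 < m\<close>] by simp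
qed

lemma lambda1_msum_skew_arrow_squares:
  fixes A :: "nat \<Rightarrow> real mat"
  assumes "0 < m"
    and A: "\<And>l. l \<in> K \<Longrightarrow> A l \<in> carrier_mat m m"
    and skew: "\<And>l. l \<in> K \<Longrightarrow> transpose_mat (A l) = - A l"
    and lower: "\<And>l. l \<in> K \<Longrightarrow> lower_block_sqnorm (A l) = 0"
  shows "lambda1 (msum m K (\<lambda>l. A l * A l)) = - (\<Sum>l\<in>K. \<Sum>k<m. (A l $$ (k, 0))\<^sup>2)"
proof (rule lambda1_neg_gram_minus_corner[where u = "\<lambda>l i. A l $$ (i, 0)", OF msum_carrier \<open>0 < m\<close>])
  show "A l $$ (0, 0) = 0" if "l \<in> K" for l
    using skew_mat_entry[OF A[OF that] skew[OF that] \<open>0 < m\<close> \<open>0 < m\<close>] by simp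
  fix i j assume "i < m" "j < m"
  then show "msum m K (\<lambda>l. A l * A l) $$ (i, j) = - (\<Sum>l\<in>K. A l $$ (i, 0) * A l $$ (j, 0))
      - (if i = 0 \<and> j = 0 then \<Sum>l\<in>K. \<Sum>k<m. (A l $$ (k, 0))\<^sup>2 else 0)"
    by (simp add: index_msum skew_square_arrow[OF A skew lower] sum_subtractf sum_negf
        del: index_mult_mat(1))
qed simp

lemma sum_diag_entries_split:
  fixes m n :: nat and f v :: "nat \<Rightarrow> 'a::comm_monoid_add"
  assumes "0 < n" "n \<le> m"
  shows "(\<Sum>i<m. if i = 0 then a else if i < n then f i else v (i - n))
    = a + (\<Sum>i\<in>{1..<n}. f i) + (\<Sum>j<m - n. v j)"
proof -
  define d where "d i = (if i = 0 then a else if i < n then f i else v (i - n))" for i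
  have "0 < m" using assms by simp
  have "(\<Sum>i<m. d i) = d 0 + (\<Sum>i\<in>{1..<n}. d i) + (\<Sum>i\<in>{n..<m}. d i)"
    using sum_lessThan_first[OF \<open>0 < m\<close>, of d] sum.atLeastLessThan_concat[of 1 n m d] assms
    by (simp add: add.assoc)
  also have "(\<Sum>i\<in>{n..<m}. d i) = (\<Sum>j<m - n. v j)"
    using \<open>0 < n\<close> by (simp add: sum.atLeastLessThan_shift_0[of _ n m] d_def lessThan_atLeast0)
  finally show ?thesis
    by (simp add: d_def)
qed

lemma diag_identity_corner_and_trace:
  fixes M :: "nat \<Rightarrow> real mat" and v :: "nat \<Rightarrow> real"
  assumes "0 < n" and "n \<le> m"
    and M: "\<And>l. l < n \<Longrightarrow> M l \<in> carrier_mat m m"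
    and identity: "M 0 * M 0 - msum m {1..<n} (\<lambda>l. M l * M l) =
      diag_of m (\<lambda>i. if i = 0 then - mtrace (M 0 * M 0) / 2
                     else if i < n then mtrace (M i * M i) / 2
                     else v (i - n))"
  shows "(M 0 * M 0) $$ (0, 0) - (\<Sum>l\<in>{1..<n}. (M l * M l) $$ (0, 0)) = - mtrace (M 0 * M 0) / 2"
    and "mtrace (M 0 * M 0) - (\<Sum>l\<in>{1..<n}. mtrace (M l * M l))
      = - mtrace (M 0 * M 0) / 2 + (\<Sum>l\<in>{1..<n}. mtrace (M l * M l)) / 2 + (\<Sum>j<m - n. v j)"
proof -
  have "0 < m" using assms(1,2) by simp
  show "(M 0 * M 0) $$ (0, 0) - (\<Sum>l\<in>{1..<n}. (M l * M l) $$ (0, 0)) = - mtrace (M 0 * M 0) / 2"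
    using arg_cong[OF identity, of "\<lambda>A. A $$ (0, 0)"] M[OF \<open>0 < n\<close>] \<open>0 < m\<close>
    by (simp add: msum_def diag_of_def del: index_mult_mat(1))
  have "mtrace (msum m {1..<n} (\<lambda>l. M l * M l)) = (\<Sum>l\<in>{1..<n}. mtrace (M l * M l))"
    using M by (intro mtrace_msum) (meson atLeastLessThan_iff mult_carrier_mat)
  then have "mtrace (M 0 * M 0 - msum m {1..<n} (\<lambda>l. M l * M l))
      = mtrace (M 0 * M 0) - (\<Sum>l\<in>{1..<n}. mtrace (M l * M l))"
    using M[OF \<open>0 < n\<close>] by (simp add: mtrace_minus[OF _ msum_carrier])
  then show "mtrace (M 0 * M 0) - (\<Sum>l\<in>{1..<n}. mtrace (M l * M l))
      = - mtrace (M 0 * M 0) / 2 + (\<Sum>l\<in>{1..<n}. mtrace (M l * M l)) / 2 + (\<Sum>j<m - n. v j)"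
    using identity sum_diag_entries_split[OF assms(1,2), of "- mtrace (M 0 * M 0) / 2"
        "\<lambda>i. mtrace (M i * M i) / 2" v]
    by (simp add: mtrace_diag_of sum_divide_distrib)
qed

lemma skew_squares_diag_identity_vanishing:
  fixes M :: "nat \<Rightarrow> real mat" and v :: "nat \<Rightarrow> real"
  assumes "0 < n" and "n \<le> m"
    and M: "\<And>l. l < n \<Longrightarrow> M l \<in> carrier_mat m m"
    and skew: "\<And>l. l < n \<Longrightarrow> transpose_mat (M l) = - M l"
    and v: "\<And>j. j < m - n \<Longrightarrow> v j \<le> 0"
    and identity: "M 0 * M 0 - msum m {1..<n} (\<lambda>l. M l * M l) =
      diag_of m (\<lambda>i. if i = 0 then - mtrace (M 0 * M 0) / 2
                     else if i < n then mtrace (M i * M i) / 2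
                     else v (i - n))"
  shows "(\<forall>j < m - n. v j = 0) \<and> (\<forall>l\<in>{1..<n}. lower_block_sqnorm (M l) = 0)"
proof -
  have "0 < m" using assms(1,2) by simp
  define t where "t l = mtrace (M l * M l)" for l
  define c where "c l = (M l * M l) $$ (0, 0)" for l
  define R where "R = (\<Sum>l\<in>{1..<n}. lower_block_sqnorm (M l))"
  define V where "V = (\<Sum>j<m - n. v j)"
  note corner = diag_identity_corner_and_trace(1)[OF assms(1,2) M identity, folded c_def t_def]
  note trace = diag_identity_corner_and_trace(2)[OF assms(1,2) M identity, folded t_def V_def]
  have t_c: "t l = 2 * c l - lower_block_sqnorm (M l)" if "l < n" for l
    unfolding t_def c_def by (rule mtrace_skew_square[OF M[OF that] skew[OF that] \<open>0 < m\<close>])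
  then have "(\<Sum>l\<in>{1..<n}. t l) = 2 * (\<Sum>l\<in>{1..<n}. c l) - R"
    by (simp add: R_def sum_subtractf sum_distrib_left)
  moreover have "c 0 \<le> 0"
    using skew_square_diag[OF M skew \<open>0 < m\<close>] \<open>0 < n\<close> by (simp add: c_def sum_nonneg)
  moreover have "0 \<le> R"
    by (simp add: R_def sum_nonneg lower_block_sqnorm_nonneg)
  moreover have "V \<le> 0"
    unfolding V_def by (intro sum_nonpos) (simp add: v)
  \<comment> \<open>Together: 3/2 (R - 2 c 0) = V, with c 0 \<le> 0 \<le> R and V \<le> 0.\<close>
  ultimately have "V = 0" "R = 0"
    using trace corner t_c[OF \<open>0 < n\<close>] by linarith+
  have "(\<Sum>j<m - n. - v j) = 0"
    using \<open>V = 0\<close> by (simp add: V_def sum_negf)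
  then have "\<forall>j < m - n. v j = 0"
    using v by (subst (asm) sum_nonneg_eq_0_iff) auto
  moreover have "\<forall>l\<in>{1..<n}. lower_block_sqnorm (M l) = 0"
    using \<open>R = 0\<close> by (simp add: R_def sum_nonneg_eq_0_iff lower_block_sqnorm_nonneg)
  ultimately show ?thesis ..
qed

theorem lemma4p1:
  fixes m n :: nat and M :: "nat \<Rightarrow> real mat" and v :: "nat \<Rightarrow> real"
  assumes "2 \<le> n" and "n \<le> m"
    and "\<And>l. l < n \<Longrightarrow> M l \<in> carrier_mat m m"
    and "\<And>l. l < n \<Longrightarrow> transpose_mat (M l) = - M l"
    and "\<And>j. j < m - n \<Longrightarrow> v j \<le> 0"
    and "M 0 * M 0 - msum m {1..<n} (\<lambda>l. M l * M l) =
         diag_of m (\<lambda>i. if i = 0 then - mtrace (M 0 * M 0) / 2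
                        else if i < n then mtrace (M i * M i) / 2
                        else v (i - n))"
  shows "(\<forall>j < m - n. v j = 0)
    \<and> lambda1 (msum m {1..<n} (\<lambda>l. M l * M l)) = (\<Sum>l\<in>{1..<n}. lambda1 (M l * M l))
    \<and> (\<forall>i\<in>{1..<n}. vec_space.rank m (M i) \<le> 2)"
proof -
  have "0 < m" using assms(1,2) by simp
  have v: "\<forall>j < m - n. v j = 0" and lower: "\<forall>l\<in>{1..<n}. lower_block_sqnorm (M l) = 0"
    using skew_squares_diag_identity_vanishing[of n m M v] assms by auto
  have lambda1_M: "lambda1 (M l * M l) = - (\<Sum>k<m. (M l $$ (k, 0))\<^sup>2)" if "l \<in> {1..<n}" for l
    using lambda1_msum_skew_arrow_squares[of m "{l}" M] msum_singleton[of "\<lambda>l. M l * M l" l m]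
      assms(3,4) lower that \<open>0 < m\<close> by auto
  have "lambda1 (msum m {1..<n} (\<lambda>l. M l * M l)) = (\<Sum>l\<in>{1..<n}. lambda1 (M l * M l))"
    using lambda1_msum_skew_arrow_squares[of m "{1..<n}" M] assms(3,4) lower \<open>0 < m\<close>
    by (simp add: lambda1_M sum_negf)
  moreover have "\<forall>i\<in>{1..<n}. vec_space.rank m (M i) \<le> 2"
    using rank_le_2_if_lower_block_zero assms(3) lower by simp
  ultimately show ?thesis
    using v by blast
qed

end
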